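(* Let $B$ be a connected graded commutative algebra over a field $\mathbb{F}$ admitting an action by graded algebra automorphisms of a finite group $\Gamma$ whose order is prime to the characteristic of $\mathbb{F}$, and let $A$ be a graded $\mathbb{F}$-subalgebra of the invariant ring $B^\Gamma$. If $B/\!\!/A=B/\!\!/B^\Gamma$ (i.e. the ideals of $B$ generated by $A^{\geq1}$ and by $(B^\Gamma)^{\geq1}$ coincide), then $A=B^\Gamma$.
   Context: For a connected graded algebra $C$, $C^{\geq1}$ denotes its augmentation ideal (elements of positive degree). For a map $A\to B$ of connected graded algebras, $B/\!\!/A$ denotes $B/f(A^{\geq1})B$. *)

theory Defs
  imports "HOL-Algebra.Group"
begin

text \<open>A graded algebra B over a field k is modelled by a ring type 'b (the carrier is UNIV),
  a scalar multiplication sm, and the homogeneous pieces Bd n (n = degree).\<close>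

definition is_decomp :: "(nat \<Rightarrow> 'b::ring_1 set) \<Rightarrow> 'b \<Rightarrow> (nat \<Rightarrow> 'b) \<Rightarrow> bool" where
  "is_decomp Bd x c \<longleftrightarrow>
     (\<forall>n. c n \<in> Bd n) \<and> finite {n. c n \<noteq> 0} \<and> x = sum c {n. c n \<noteq> 0}"

definition hcomp :: "(nat \<Rightarrow> 'b::ring_1 set) \<Rightarrow> nat \<Rightarrow> 'b \<Rightarrow> 'b" where
  "hcomp Bd n x = (THE c. is_decomp Bd x c) n"

definition graded_algebra :: "('k::field \<Rightarrow> 'b::ring_1 \<Rightarrow> 'b) \<Rightarrow> (nat \<Rightarrow> 'b set) \<Rightarrow> bool" where
  "graded_algebra sm Bd \<longleftrightarrow>
     (\<forall>x. sm 1 x = x) \<and>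
     (\<forall>c d x. sm c (sm d x) = sm (c * d) x) \<and>
     (\<forall>c d x. sm (c + d) x = sm c x + sm d x) \<and>
     (\<forall>c x y. sm c (x + y) = sm c x + sm c y) \<and>
     (\<forall>c x y. sm c (x * y) = sm c x * y) \<and>
     (\<forall>c x y. sm c (x * y) = x * sm c y) \<and>
     (\<forall>n. 0 \<in> Bd n \<and> (\<forall>x\<in>Bd n. \<forall>y\<in>Bd n. x + y \<in> Bd n) \<and> (\<forall>c. \<forall>x\<in>Bd n. sm c x \<in> Bd n)) \<and>
     1 \<in> Bd 0 \<and>
     (\<forall>m n x y. x \<in> Bd m \<longrightarrow> y \<in> Bd n \<longrightarrow> x * y \<in> Bd (m + n)) \<and>
     (\<forall>x. \<exists>!c. is_decomp Bd x c)"

definition connected_graded :: "('k::field \<Rightarrow> 'b::ring_1 \<Rightarrow> 'b) \<Rightarrow> (nat \<Rightarrow> 'b set) \<Rightarrow> bool" where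
  "connected_graded sm Bd \<longleftrightarrow> Bd 0 = range (\<lambda>c. sm c 1)"

text \<open>Graded commutativity with sign eps (eps = 1: strictly commutative; eps = -1: Koszul signs).\<close>
definition graded_comm :: "(nat \<Rightarrow> 'b::ring_1 set) \<Rightarrow> 'b \<Rightarrow> bool" where
  "graded_comm Bd eps \<longleftrightarrow>
     (\<forall>m n x y. x \<in> Bd m \<longrightarrow> y \<in> Bd n \<longrightarrow> x * y = eps ^ (m * n) * (y * x))"

definition graded_action ::
  "('k::field \<Rightarrow> 'b::ring_1 \<Rightarrow> 'b) \<Rightarrow> (nat \<Rightarrow> 'b set) \<Rightarrow> ('g, 'm) monoid_scheme \<Rightarrow> ('g \<Rightarrow> 'b \<Rightarrow> 'b) \<Rightarrow> bool" where
  "graded_action sm Bd G act \<longleftrightarrow>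
     (\<forall>x. act \<one>\<^bsub>G\<^esub> x = x) \<and>
     (\<forall>g\<in>carrier G. \<forall>h\<in>carrier G. \<forall>x. act (g \<otimes>\<^bsub>G\<^esub> h) x = act g (act h x)) \<and>
     (\<forall>g\<in>carrier G.
        (\<forall>x y. act g (x + y) = act g x + act g y) \<and>
        (\<forall>x y. act g (x * y) = act g x * act g y) \<and>
        act g 1 = 1 \<and>
        (\<forall>c x. act g (sm c x) = sm c (act g x)) \<and>
        (\<forall>n x. x \<in> Bd n \<longrightarrow> act g x \<in> Bd n))"

definition invariants :: "('g, 'm) monoid_scheme \<Rightarrow> ('g \<Rightarrow> 'b \<Rightarrow> 'b) \<Rightarrow> 'b set" where
  "invariants G act = {x. \<forall>g\<in>carrier G. act g x = x}"

definition graded_subalgebra :: "('k::field \<Rightarrow> 'b::ring_1 \<Rightarrow> 'b) \<Rightarrow> (nat \<Rightarrow> 'b set) \<Rightarrow> 'b set \<Rightarrow> bool" where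
  "graded_subalgebra sm Bd A \<longleftrightarrow>
     1 \<in> A \<and>
     (\<forall>x\<in>A. \<forall>y\<in>A. x + y \<in> A) \<and>
     (\<forall>x\<in>A. \<forall>y\<in>A. x * y \<in> A) \<and>
     (\<forall>c. \<forall>x\<in>A. sm c x \<in> A) \<and>
     (\<forall>x\<in>A. \<forall>n. hcomp Bd n x \<in> A)"

definition aug :: "(nat \<Rightarrow> 'b::ring_1 set) \<Rightarrow> 'b set \<Rightarrow> 'b set" where
  "aug Bd C = {x \<in> C. hcomp Bd 0 x = 0}"

text \<open>The (right) ideal X B of B generated by X: finite sums of x * b with x in X.\<close>
definition ideal_gen :: "'b::ring_1 set \<Rightarrow> 'b set" where
  "ideal_gen X = {y. \<exists>k (x :: nat \<Rightarrow> 'b) b. (\<forall>i<k. x i \<in> X) \<and> y = (\<Sum>i<k. x i * b i)}"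

end

theory Submission
  imports Defs
begin

text \<open>
  Induction on the degree. A homogeneous invariant f of positive degree n lies in the ideal
  generated by the augmentation ideal of the invariant ring, hence in the one generated by that
  of A: \<open>f = \<Sum>i. a\<^sub>i * b\<^sub>i\<close> with \<open>a\<^sub>i\<close> in A of positive degree. The Reynolds operator
  \<open>R = |\<Gamma>|\<inverse> \<Sum>\<^sub>g g\<close> fixes f and is linear over the invariants, so \<open>f = \<Sum>i. a\<^sub>i * R b\<^sub>i\<close>.
  In degree n each summand is a product of a component of some \<open>a\<^sub>i\<close> of positive degree with
  an invariant of degree less than n, which lies in A by induction.

  Finiteness of \<open>\<Gamma>\<close> is implied by
  \<open>|\<Gamma>| \<noteq> 0\<close> in the field, since \<open>card\<close> of an infinite set is 0.
\<close>

lemma ideal_gen_base: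
  fixes x :: "'b::ring_1"
  assumes "x \<in> X"
  shows "x \<in> ideal_gen X"
  unfolding ideal_gen_def using assms
  by (intro CollectI exI[where x = "Suc 0"] exI[where x = "\<lambda>_. x"] exI[where x = "\<lambda>_. 1"]) simp

locale graded_alg =
  fixes sm :: "'k::field \<Rightarrow> 'b::ring_1 \<Rightarrow> 'b" and Bd :: "nat \<Rightarrow> 'b set"
  assumes graded: "graded_algebra sm Bd"
begin

lemma sm_one: "sm 1 x = x"
  using graded unfolding graded_algebra_def by (elim conjE) simp

lemma sm_sm: "sm c (sm d x) = sm (c * d) x"
  using graded unfolding graded_algebra_def by (elim conjE) simp

lemma sm_add_scalar: "sm (c + d) x = sm c x + sm d x"
  using graded unfolding graded_algebra_def by (elim conjE) simp

lemma sm_add: "sm c (x + y) = sm c x + sm c y"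
  using graded unfolding graded_algebra_def by (elim conjE) simp

lemma sm_mult_right: "sm c (x * y) = x * sm c y"
  using graded unfolding graded_algebra_def by (elim conjE) simp

lemma zero_in_Bd: "0 \<in> Bd n"
  using graded unfolding graded_algebra_def by (elim conjE) simp

lemma add_in_Bd: "x \<in> Bd n \<Longrightarrow> y \<in> Bd n \<Longrightarrow> x + y \<in> Bd n"
  using graded unfolding graded_algebra_def by (elim conjE) simp

lemma mult_in_Bd: "x \<in> Bd m \<Longrightarrow> y \<in> Bd n \<Longrightarrow> x * y \<in> Bd (m + n)"
  using graded unfolding graded_algebra_def by (elim conjE) simp

lemma ex1_decomp: "\<exists>!c. is_decomp Bd x c"
  using graded unfolding graded_algebra_def by (elim conjE) simp

lemma sm_zero_scalar: "sm 0 x = 0"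
  using sm_add_scalar[of 0 0 x] by simp

lemma sm_zero: "sm c 0 = 0"
  using sm_add[of c 0 0] by simp

lemma sm_of_nat: "sm (of_nat m) x = of_nat m * x"
  by (induction m) (simp_all add: sm_zero_scalar sm_add_scalar sm_one distrib_right)

lemma is_decomp_hcomp: "is_decomp Bd x (\<lambda>n. hcomp Bd n x)"
  unfolding hcomp_def using theI'[OF ex1_decomp] by simp

lemma hcomp_in_Bd: "hcomp Bd n x \<in> Bd n"
  using is_decomp_hcomp unfolding is_decomp_def by blast

lemma hcomp_vanishes: "\<exists>N. \<forall>n\<ge>N. hcomp Bd n x = 0"
proof -
  have "finite {n. hcomp Bd n x \<noteq> 0}"
    using is_decomp_hcomp unfolding is_decomp_def by blast
  then obtain N where "{n. hcomp Bd n x \<noteq> 0} \<subseteq> {..<N}"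
    using finite_nat_set_iff_bounded by auto
  then show ?thesis
    by (auto simp: subset_eq not_less[symmetric])
qed

lemma sum_hcomp:
  assumes "\<forall>n\<ge>N. hcomp Bd n x = 0"
  shows "x = (\<Sum>n<N. hcomp Bd n x)"
proof -
  have "x = (\<Sum>n\<in>{n. hcomp Bd n x \<noteq> 0}. hcomp Bd n x)"
    using is_decomp_hcomp unfolding is_decomp_def by blast
  also have "\<dots> = (\<Sum>n<N. hcomp Bd n x)"
    by (rule sum.mono_neutral_left) (use assms not_less in auto)
  finally show ?thesis .
qed

lemma hcomp_eq:
  assumes "\<forall>n. c n \<in> Bd n" and "\<forall>n\<ge>N. c n = 0" and "x = (\<Sum>n<N. c n)"
  shows "hcomp Bd n x = c n"
proof -
  have support: "{n. c n \<noteq> 0} \<subseteq> {..<N}"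
    using assms(2) not_less by auto
  have "is_decomp Bd x c"
    unfolding is_decomp_def
  proof (intro conjI)
    show "finite {n. c n \<noteq> 0}"
      using support finite_subset by blast
    show "x = sum c {n. c n \<noteq> 0}"
      unfolding assms(3) by (rule sum.mono_neutral_right) (use support in auto)
  qed (use assms(1) in simp)
  then show ?thesis
    using is_decomp_hcomp ex1_decomp by metis
qed

lemma hcomp_homogeneous:
  assumes "x \<in> Bd m"
  shows "hcomp Bd n x = (if n = m then x else 0)"
  by (rule hcomp_eq[where N = "Suc m"]) (use assms zero_in_Bd in auto)

lemma hcomp_zero: "hcomp Bd n 0 = 0"
  using hcomp_homogeneous[OF zero_in_Bd[of 0]] by simp

lemma hcomp_add: "hcomp Bd n (x + y) = hcomp Bd n x + hcomp Bd n y"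
proof -
  obtain N where N: "\<forall>n\<ge>N. hcomp Bd n x = 0" "\<forall>n\<ge>N. hcomp Bd n y = 0"
  proof -
    obtain Nx Ny where "\<forall>n\<ge>Nx. hcomp Bd n x = 0" "\<forall>n\<ge>Ny. hcomp Bd n y = 0"
      using hcomp_vanishes by metis
    then show thesis
      by (intro that[of "max Nx Ny"]) auto
  qed
  show ?thesis
  proof (rule hcomp_eq[where N = N])
    show "x + y = (\<Sum>n<N. hcomp Bd n x + hcomp Bd n y)"
      using sum_hcomp[OF N(1)] sum_hcomp[OF N(2)] by (simp add: sum.distrib)
  qed (use N hcomp_in_Bd add_in_Bd in auto)
qed

lemma hcomp_sum: "hcomp Bd n (sum f S) = (\<Sum>i\<in>S. hcomp Bd n (f i))"
  by (induction S rule: infinite_finite_induct) (simp_all add: hcomp_zero hcomp_add)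

lemma hcomp_mult: "hcomp Bd n (x * y) = (\<Sum>i\<le>n. hcomp Bd i x * hcomp Bd (n - i) y)"
proof -
  obtain N where N: "n < N" "\<forall>m\<ge>N. hcomp Bd m x = 0" "\<forall>m\<ge>N. hcomp Bd m y = 0"
  proof -
    obtain Nx Ny where "\<forall>m\<ge>Nx. hcomp Bd m x = 0" "\<forall>m\<ge>Ny. hcomp Bd m y = 0"
      using hcomp_vanishes by metis
    then show thesis
      by (intro that[of "max (Suc n) (max Nx Ny)"]) auto
  qed
  have "x * y = (\<Sum>i<N. \<Sum>j<N. hcomp Bd i x * hcomp Bd j y)"
    using sum_hcomp[OF N(2)] sum_hcomp[OF N(3)] sum_product by metis
  then have "hcomp Bd n (x * y) = (\<Sum>i<N. \<Sum>j<N. hcomp Bd n (hcomp Bd i x * hcomp Bd j y))"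
    by (simp add: hcomp_sum)
  also have "\<dots> = (\<Sum>i<N. \<Sum>j<N. if i \<le> n \<and> j = n - i then hcomp Bd i x * hcomp Bd j y else 0)"
  proof (intro sum.cong refl)
    fix i j
    have "hcomp Bd i x * hcomp Bd j y \<in> Bd (i + j)"
      using hcomp_in_Bd mult_in_Bd by blast
    then show "hcomp Bd n (hcomp Bd i x * hcomp Bd j y)
        = (if i \<le> n \<and> j = n - i then hcomp Bd i x * hcomp Bd j y else 0)"
      by (auto simp: hcomp_homogeneous)
  qed
  also have "\<dots> = (\<Sum>i<N. if i \<le> n then hcomp Bd i x * hcomp Bd (n - i) y else 0)"
    using N(1) by (intro sum.cong refl) (auto simp: if_distrib cong: if_cong)
  also have "\<dots> = (\<Sum>i\<le>n. hcomp Bd i x * hcomp Bd (n - i) y)"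
    using N(1) by (intro sum.mono_neutral_cong_right) auto
  finally show ?thesis .
qed

context
  fixes A
  assumes subalg: "graded_subalgebra sm Bd A"
begin

lemma subalgebra_one: "1 \<in> A"
  using subalg unfolding graded_subalgebra_def by blast

lemma subalgebra_add: "x \<in> A \<Longrightarrow> y \<in> A \<Longrightarrow> x + y \<in> A"
  using subalg unfolding graded_subalgebra_def by blast

lemma subalgebra_mult: "x \<in> A \<Longrightarrow> y \<in> A \<Longrightarrow> x * y \<in> A"
  using subalg unfolding graded_subalgebra_def by blast

lemma subalgebra_sm: "x \<in> A \<Longrightarrow> sm c x \<in> A"
  using subalg unfolding graded_subalgebra_def by blast

lemma subalgebra_hcomp: "x \<in> A \<Longrightarrow> hcomp Bd n x \<in> A"
  using subalg unfolding graded_subalgebra_def by blast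

lemma subalgebra_zero: "0 \<in> A"
  using subalgebra_sm[OF subalgebra_one, of 0] by (simp add: sm_zero_scalar)

lemma subalgebra_sum: "(\<And>i. i \<in> S \<Longrightarrow> f i \<in> A) \<Longrightarrow> sum f S \<in> A"
  by (induction S rule: infinite_finite_induct) (simp_all add: subalgebra_zero subalgebra_add)

lemma subalgebra_of_hcomps:
  assumes "\<And>n. hcomp Bd n x \<in> A"
  shows "x \<in> A"
proof -
  obtain N where "\<forall>n\<ge>N. hcomp Bd n x = 0"
    using hcomp_vanishes by blast
  then show ?thesis
    using sum_hcomp subalgebra_sum assms by metis
qed

end

end

subsection \<open>The Reynolds operator\<close>

locale nonmodular_action = graded_alg sm Bd
  for sm :: "'k::field \<Rightarrow> 'b::ring_1 \<Rightarrow> 'b" and Bd +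
  fixes G :: "('g, 'm) monoid_scheme" and act :: "'g \<Rightarrow> 'b \<Rightarrow> 'b"
  assumes group: "group G"
    and action: "graded_action sm Bd G act"
    and card_nonzero: "of_nat (card (carrier G)) \<noteq> (0::'k)"
begin

context
  fixes g
  assumes g: "g \<in> carrier G"
begin

lemma act_add: "act g (x + y) = act g x + act g y"
  using action g unfolding graded_action_def by (elim conjE) simp

lemma act_mult: "act g (x * y) = act g x * act g y"
  using action g unfolding graded_action_def by (elim conjE) simp

lemma act_sm: "act g (sm c x) = sm c (act g x)"
  using action g unfolding graded_action_def by (elim conjE) simp

lemma act_Bd: "x \<in> Bd n \<Longrightarrow> act g x \<in> Bd n"
  using action g unfolding graded_action_def by (elim conjE) simp

lemma act_comp: "h \<in> carrier G \<Longrightarrow> act (g \<otimes>\<^bsub>G\<^esub> h) x = act g (act h x)"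
  using action g unfolding graded_action_def by (elim conjE) simp

lemma act_zero: "act g 0 = 0"
  using act_add[of 0 0] by simp

lemma act_sum: "act g (sum f S) = (\<Sum>i\<in>S. act g (f i))"
  by (induction S rule: infinite_finite_induct) (simp_all add: act_zero act_add)

lemma hcomp_act: "hcomp Bd n (act g x) = act g (hcomp Bd n x)"
proof -
  obtain N where N: "\<forall>n\<ge>N. hcomp Bd n x = 0"
    using hcomp_vanishes by blast
  show ?thesis
  proof (rule hcomp_eq[where N = N])
    show "act g x = (\<Sum>n<N. act g (hcomp Bd n x))"
      using sum_hcomp[OF N] act_sum by metis
  qed (use N hcomp_in_Bd act_Bd act_zero in auto)
qed

end

lemma hcomp_invariant: "x \<in> invariants G act \<Longrightarrow> hcomp Bd n x \<in> invariants G act"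
  unfolding invariants_def by (simp add: hcomp_act[symmetric])

definition reynolds :: "'b \<Rightarrow> 'b" where
  "reynolds x = sm (inverse (of_nat (card (carrier G)))) (\<Sum>g\<in>carrier G. act g x)"

lemma reynolds_invariant: "reynolds x \<in> invariants G act"
  unfolding invariants_def
proof (intro CollectI ballI)
  fix h assume h: "h \<in> carrier G"
  have "(\<Sum>g\<in>carrier G. act h (act g x)) = (\<Sum>g\<in>carrier G. act (h \<otimes>\<^bsub>G\<^esub> g) x)"
    using act_comp[OF h] by simp
  also have "\<dots> = (\<Sum>g\<in>(\<lambda>g. h \<otimes>\<^bsub>G\<^esub> g) ` carrier G. act g x)"
    by (rule sum.reindex[symmetric, unfolded o_def]) (rule group.inj_on_cmult[OF group h])
  also have "\<dots> = (\<Sum>g\<in>carrier G. act g x)"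
    using group.surj_const_mult[OF group h] by simp
  finally show "act h (reynolds x) = reynolds x"
    unfolding reynolds_def act_sm[OF h] act_sum[OF h] by simp
qed

lemma reynolds_fixes_invariants:
  assumes "x \<in> invariants G act"
  shows "reynolds x = x"
proof -
  have "(\<Sum>g\<in>carrier G. act g x) = sm (of_nat (card (carrier G))) x"
    using assms by (simp add: invariants_def sm_of_nat)
  then show ?thesis
    unfolding reynolds_def using card_nonzero by (simp add: sm_sm sm_one)
qed

lemma reynolds_mult_invariant:
  assumes "a \<in> invariants G act"
  shows "reynolds (a * x) = a * reynolds x"
proof -
  have "(\<Sum>g\<in>carrier G. act g (a * x)) = a * (\<Sum>g\<in>carrier G. act g x)"
    using assms by (simp add: invariants_def act_mult sum_distrib_left)
  then show ?thesis
    unfolding reynolds_def by (simp add: sm_mult_right)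
qed

lemma reynolds_sum: "reynolds (sum f S) = (\<Sum>i\<in>S. reynolds (f i))"
proof -
  have "reynolds 0 = 0" and "reynolds (x + y) = reynolds x + reynolds y" for x y
    unfolding reynolds_def by (simp_all add: act_zero act_add sum.distrib sm_zero sm_add)
  then show ?thesis
    by (induction S rule: infinite_finite_induct) simp_all
qed

context
  fixes A
  assumes subalg: "graded_subalgebra sm Bd A"
    and A_invariant: "A \<subseteq> invariants G act"
begin

lemma homogeneous_invariant_in_subalgebra_step:
  assumes f: "f \<in> Bd n" "f \<in> invariants G act" "f \<in> ideal_gen (aug Bd A)"
    and lower: "\<And>m h. m < n \<Longrightarrow> h \<in> Bd m \<Longrightarrow> h \<in> invariants G act \<Longrightarrow> h \<in> A"
  shows "f \<in> A"
proof -
  obtain k :: nat and a b where a: "\<forall>i<k. a i \<in> aug Bd A" and f_eq: "f = (\<Sum>i<k. a i * b i)"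
    using f(3) unfolding ideal_gen_def by blast
  have "f = hcomp Bd n (reynolds f)"
    using f by (simp add: reynolds_fixes_invariants hcomp_homogeneous)
  also have "\<dots> = hcomp Bd n (\<Sum>i<k. a i * reynolds (b i))"
    using a A_invariant unfolding f_eq aug_def
    by (auto simp: reynolds_sum reynolds_mult_invariant intro!: sum.cong arg_cong[where f = "hcomp Bd n"])
  also have "\<dots> = (\<Sum>i<k. \<Sum>j\<le>n. hcomp Bd j (a i) * hcomp Bd (n - j) (reynolds (b i)))"
    by (simp add: hcomp_sum hcomp_mult)
  also have "\<dots> \<in> A"
  proof (intro subalgebra_sum[OF subalg])
    fix i j assume i: "i \<in> {..<k}" and j: "j \<in> {..n}"
    show "hcomp Bd j (a i) * hcomp Bd (n - j) (reynolds (b i)) \<in> A"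
    proof (cases "j = 0")
      case True
      then show ?thesis
        using a i subalgebra_zero[OF subalg] unfolding aug_def by simp
    next
      case False
      have "hcomp Bd (n - j) (reynolds (b i)) \<in> A"
        using j False by (intro lower[of "n - j"] hcomp_in_Bd hcomp_invariant reynolds_invariant) auto
      moreover have "hcomp Bd j (a i) \<in> A"
        using a i subalgebra_hcomp[OF subalg] unfolding aug_def by simp
      ultimately show ?thesis
        using subalgebra_mult[OF subalg] by blast
    qed
  qed
  finally show ?thesis .
qed

lemma homogeneous_invariant_in_subalgebra:
  assumes connected: "connected_graded sm Bd"
    and ideal: "aug Bd (invariants G act) \<subseteq> ideal_gen (aug Bd A)"
  shows "f \<in> Bd n \<Longrightarrow> f \<in> invariants G act \<Longrightarrow> f \<in> A"
proof (induction n arbitrary: f rule: less_induct)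
  case (less n)
  show ?case
  proof (cases "n = 0")
    case True
    then obtain c where "f = sm c 1"
      using less.prems connected unfolding connected_graded_def by auto
    then show ?thesis
      using subalgebra_sm[OF subalg subalgebra_one[OF subalg]] by simp
  next
    case False
    then have "f \<in> aug Bd (invariants G act)"
      using less.prems by (simp add: aug_def hcomp_homogeneous)
    then have "f \<in> ideal_gen (aug Bd A)"
      using ideal by blast
    then show ?thesis
      using homogeneous_invariant_in_subalgebra_step less by blast
  qed
qed

end

end

theorem lemmaA12:
  fixes sm :: "'k::field \<Rightarrow> 'b::ring_1 \<Rightarrow> 'b"
    and Bd :: "nat \<Rightarrow> 'b set"
    and eps :: 'b
    and G :: "('g, 'm) monoid_scheme"
    and act :: "'g \<Rightarrow> 'b \<Rightarrow> 'b"
    and A :: "'b set"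
  assumes "graded_algebra sm Bd"
    and "connected_graded sm Bd"
    and "eps = 1 \<or> eps = -1"
    and "graded_comm Bd eps"
    and "group G"
    and "finite (carrier G)"
    and "of_nat (card (carrier G)) \<noteq> (0::'k)"
    and "graded_action sm Bd G act"
    and "graded_subalgebra sm Bd A"
    and "A \<subseteq> invariants G act"
    and "ideal_gen (aug Bd A) = ideal_gen (aug Bd (invariants G act))"
  shows "A = invariants G act"
proof
  interpret nonmodular_action sm Bd G act
    using assms(1,5,7,8) by (intro nonmodular_action.intro graded_alg.intro nonmodular_action_axioms.intro)
  have ideal: "aug Bd (invariants G act) \<subseteq> ideal_gen (aug Bd A)"
    using assms(11) ideal_gen_base by blast
  have "hcomp Bd n y \<in> A" if "y \<in> invariants G act" for y n
    using homogeneous_invariant_in_subalgebra[OF assms(9,10,2) ideal hcomp_in_Bd hcomp_invariant[OF that]] .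
  then show "invariants G act \<subseteq> A"
    using subalgebra_of_hcomps[OF assms(9)] by blast
qed (fact assms(10))

end
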